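(* Let $L$ be a lattice. The following are equivalent: (1) $\exists$ has an $\omega$-strategy in the $(m,k)$-game on $L$ with starting position $(\{a\},\{b\})$ for all $a,b\in L$ with $a\not\leq b$ and for all $3\leq m,k\leq\omega$; (2) $\exists$ has a $5$-strategy in the $(3,3)$-game on $L$ with starting position $(\{a\},\{b\})$ for all $a,b\in L$ with $a\not\leq b$; (3) $L$ is distributive.
   Context: Work in ZFC. For a poset $P$, $2\leq\alpha,\beta\leq\omega$ and $U_0,V\subseteq P$, the $(\alpha,\beta)$-game with starting position $(U_0,V)$ is played between $\forall$ and $\exists$ in rounds $0,1,2,\ldots$; a set $U$ is maintained, initially $U_0$, with $V$ fixed. Each round $\forall$ moves and $\exists$ responds: (1) if $b\geq a$ for some $a\in U$, $\forall$ may play $(b)$ and $\exists$ must add $b$ to $U$; (2) if $A\subseteq U$ with $|A|<\alpha$ and $\bigwedge A$ exists in $P$, $\forall$ may play $A$ and $\exists$ must add $\bigwedge A$ to $U$; (3) if $B\subseteq P$ with $|B|<\beta$ and $\bigvee B$ exists in $P$ and lies in $U$, $\forall$ may play $B$ and $\exists$ must choose some $b\in B$ and add it to $U$. $\forall$ wins in round $n$ if $U\cap V\neq\emptyset$ at the beginning of round $n$. $\exists$ has an $n$-strategy if she can guarantee that $\forall$ does not win until at least round $n+1$, and an $\omega$-strategy if she can guarantee that $\forall$ never wins. *)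

theory Defs
  imports Main "HOL-Library.Extended_Nat"
begin

text \<open>The poset P is the carrier (UNIV) of a type of class order.
  Cardinal bounds alpha, beta with 2 \<le> alpha, beta \<le> omega are elements of enat,
  omega being \<infinity>; |A| < alpha means: A finite and card A < alpha.\<close>

definition is_meet :: "'a::order set \<Rightarrow> 'a \<Rightarrow> bool" where
  "is_meet A m \<longleftrightarrow> (\<forall>a\<in>A. m \<le> a) \<and> (\<forall>x. (\<forall>a\<in>A. x \<le> a) \<longrightarrow> x \<le> m)"

definition is_join :: "'a::order set \<Rightarrow> 'a \<Rightarrow> bool" where
  "is_join B s \<longleftrightarrow> (\<forall>b\<in>B. b \<le> s) \<and> (\<forall>x. (\<forall>b\<in>B. b \<le> x) \<longrightarrow> s \<le> x)"

definition card_less :: "'a set \<Rightarrow> enat \<Rightarrow> bool" where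
  "card_less A \<kappa> \<longleftrightarrow> finite A \<and> enat (card A) < \<kappa>"

text \<open>One round: for every move of \<forall>, \<exists> has a legal response leading to a
  position satisfying Q.\<close>
definition round_ok :: "enat \<Rightarrow> enat \<Rightarrow> ('a::order set \<Rightarrow> bool) \<Rightarrow> 'a set \<Rightarrow> bool" where
  "round_ok \<alpha> \<beta> Q U \<longleftrightarrow>
     (\<forall>b. (\<exists>a\<in>U. a \<le> b) \<longrightarrow> Q (insert b U)) \<and>
     (\<forall>A m. A \<subseteq> U \<and> card_less A \<alpha> \<and> is_meet A m \<longrightarrow> Q (insert m U)) \<and>
     (\<forall>B s. card_less B \<beta> \<and> is_join B s \<and> s \<in> U \<longrightarrow> (\<exists>b\<in>B. Q (insert b U)))"

text \<open>n_strategy n alpha beta U V: \<exists> has an n-strategy in the (alpha,beta)-game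
  with starting position (U,V), i.e. U \<inter> V = {} at the beginning of rounds 0..n.\<close>
fun n_strategy :: "nat \<Rightarrow> enat \<Rightarrow> enat \<Rightarrow> 'a::order set \<Rightarrow> 'a set \<Rightarrow> bool" where
  "n_strategy 0 \<alpha> \<beta> U V \<longleftrightarrow> U \<inter> V = {}"
| "n_strategy (Suc n) \<alpha> \<beta> U V \<longleftrightarrow>
     U \<inter> V = {} \<and> round_ok \<alpha> \<beta> (\<lambda>U'. n_strategy n \<alpha> \<beta> U' V) U"

text \<open>omega_strategy alpha beta U V: \<exists> has an omega-strategy, i.e. she can guarantee
  that \<forall> never wins.  Rendered as: there is a set W of positions containing U such that
  every position in W is disjoint from V and every move of \<forall> at it has a response
  leading back into W (the positions reachable under a winning strategy form such a W;
  conversely such a W yields a positional winning strategy).\<close>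
definition omega_strategy :: "enat \<Rightarrow> enat \<Rightarrow> 'a::order set \<Rightarrow> 'a set \<Rightarrow> bool" where
  "omega_strategy \<alpha> \<beta> U V \<longleftrightarrow>
     (\<exists>W. U \<in> W \<and> (\<forall>X\<in>W. X \<inter> V = {} \<and> round_ok \<alpha> \<beta> (\<lambda>Y. Y \<in> W) X))"

end

theory Submission
  imports Defs
begin

text \<open>In a distributive lattice \<exists> keeps the invariant that the meet of the current
  finite position is not below b: moving up or taking meets does not lower this meet, and
  for a split join s = \<Squnion>B with s \<in> U distributivity gives
  \<Sqinter>U \<sqinter> s = \<Squnion>{\<Sqinter>U \<sqinter> y | y \<in> B}, so some y \<in> B keeps
  \<Sqinter>U \<sqinter> y above b. Conversely, if x \<sqinter> (y \<squnion> z) is not below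
  (x \<sqinter> y) \<squnion> (x \<sqinter> z), then \<forall> wins in five rounds from these two elements:
  he plays x and y \<squnion> z upward, splits y \<squnion> z, meets x with the chosen w and moves up
  from x \<sqinter> w to (x \<sqinter> y) \<squnion> (x \<sqinter> z).\<close>

lemma round_ok_mono:
  assumes "round_ok \<alpha> \<beta> Q U" "\<And>X. Q X \<Longrightarrow> R X"
  shows "round_ok \<alpha> \<beta> R U"
  using assms unfolding round_ok_def by (metis (no_types, lifting))

lemma omega_strategy_imp_n_strategy:
  assumes "omega_strategy \<alpha> \<beta> U V"
  shows "n_strategy n \<alpha> \<beta> U V"
proof -
  obtain W where "U \<in> W" and W: "\<And>X. X \<in> W \<Longrightarrow> X \<inter> V = {} \<and> round_ok \<alpha> \<beta> (\<lambda>Y. Y \<in> W) X"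
    using assms unfolding omega_strategy_def by blast
  have "n_strategy n \<alpha> \<beta> X V" if "X \<in> W" for X
    using that
  proof (induction n arbitrary: X)
    case 0
    then show ?case using W by simp
  next
    case (Suc n)
    have "round_ok \<alpha> \<beta> (\<lambda>Y. n_strategy n \<alpha> \<beta> Y V) X"
      using W[OF Suc.prems] Suc.IH by (blast intro: round_ok_mono)
    then show ?case using W[OF Suc.prems] by simp
  qed
  then show ?thesis using \<open>U \<in> W\<close> .
qed

lemma card_less_doubleton:
  assumes "3 \<le> \<kappa>"
  shows "card_less {u, v} \<kappa>"
proof -
  have "card {u, v} \<le> 2" by (simp add: card_insert_if)
  then have "enat (card {u, v}) < 3" by (simp add: numeral_eq_enat)
  then show ?thesis using assms unfolding card_less_def by simp
qed

lemma is_join_doubleton: "is_join {y, z} (sup y z :: 'a::lattice)"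
  unfolding is_join_def by auto

lemma is_meet_doubleton: "is_meet {x, y} (inf x y :: 'a::lattice)"
  unfolding is_meet_def by auto

lemma n_strategy_Suc_upward:
  assumes "n_strategy (Suc n) \<alpha> \<beta> U V" "u \<in> U" "u \<le> c"
  shows "n_strategy n \<alpha> \<beta> (insert c U) V"
  using assms by (auto simp: round_ok_def)

lemma n_strategy_Suc_meet:
  assumes "n_strategy (Suc n) \<alpha> \<beta> U V" "A \<subseteq> U" "card_less A \<alpha>" "is_meet A m"
  shows "n_strategy n \<alpha> \<beta> (insert m U) V"
  using assms by (auto simp: round_ok_def)

lemma n_strategy_Suc_join:
  assumes "n_strategy (Suc n) \<alpha> \<beta> U V" "card_less B \<beta>" "is_join B s" "s \<in> U"
  obtains y where "y \<in> B" "n_strategy n \<alpha> \<beta> (insert y U) V"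
  using assms by (auto simp: round_ok_def)

lemma not_n_strategy_5_nondistrib:
  fixes x y z :: "'a::lattice"
  assumes "3 \<le> \<alpha>" "3 \<le> \<beta>"
  shows "\<not> n_strategy 5 \<alpha> \<beta> {inf x (sup y z)} {sup (inf x y) (inf x z)}"
proof
  let ?a = "inf x (sup y z)" and ?b = "sup (inf x y) (inf x z)"
  have five: "(5::nat) = Suc (Suc (Suc (Suc (Suc 0))))"
    by simp
  \<comment> \<open>unfold the numeral by hand: simp would also unfold every round of n_strategy\<close>
  assume "n_strategy 5 \<alpha> \<beta> {?a} {?b}"
  then have "n_strategy (Suc (Suc (Suc (Suc (Suc 0))))) \<alpha> \<beta> {?a} {?b}"
    by (simp only: five)
  then have "n_strategy (Suc (Suc (Suc (Suc 0)))) \<alpha> \<beta> {x, ?a} {?b}"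
    by (rule n_strategy_Suc_upward[where u = ?a]) auto
  then have "n_strategy (Suc (Suc (Suc 0))) \<alpha> \<beta> {sup y z, x, ?a} {?b}"
    by (rule n_strategy_Suc_upward[where u = ?a]) auto
  then obtain w where w: "w \<in> {y, z}"
    and play: "n_strategy (Suc (Suc 0)) \<alpha> \<beta> {w, sup y z, x, ?a} {?b}"
    by (rule n_strategy_Suc_join[OF _ card_less_doubleton[OF assms(2)] is_join_doubleton]) auto
  have play1: "n_strategy (Suc 0) \<alpha> \<beta> {inf x w, w, sup y z, x, ?a} {?b}"
    by (rule n_strategy_Suc_meet[OF play _ card_less_doubleton[OF assms(1)] is_meet_doubleton]) auto
  have "inf x w \<le> ?b"
    using w by (auto intro: le_supI1 le_supI2)
  then have "n_strategy 0 \<alpha> \<beta> {?b, inf x w, w, sup y z, x, ?a} {?b}"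
    by (rule n_strategy_Suc_upward[OF play1, rotated]) simp
  then show False by simp
qed

lemma distrib_if_n_strategy_5:
  fixes x y z :: "'a::lattice"
  assumes "3 \<le> \<alpha>" "3 \<le> \<beta>"
    and "\<forall>a b::'a. \<not> a \<le> b \<longrightarrow> n_strategy 5 \<alpha> \<beta> {a} {b}"
  shows "inf x (sup y z) = sup (inf x y) (inf x z)"
proof (rule antisym)
  show "inf x (sup y z) \<le> sup (inf x y) (inf x z)"
    using assms(3) not_n_strategy_5_nondistrib[OF assms(1,2)] by blast
  show "sup (inf x y) (inf x z) \<le> inf x (sup y z)"
    by (auto intro: le_supI1 le_supI2)
qed

lemma inf_Sup_fin_le:
  fixes c t :: "'a::lattice"
  assumes "\<forall>x y z::'a. inf x (sup y z) = sup (inf x y) (inf x z)"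
    and "finite B" "B \<noteq> {}" "\<forall>y\<in>B. inf c y \<le> t"
  shows "inf c (Sup_fin B) \<le> t"
  using assms(2-4) by (induction B rule: finite_ne_induct) (simp_all add: assms(1))

definition meet_avoids :: "'a::lattice \<Rightarrow> 'a set \<Rightarrow> bool" where
  "meet_avoids b X \<longleftrightarrow> finite X \<and> X \<noteq> {} \<and> \<not> Inf_fin X \<le> b"

lemma meet_avoids_disjoint: "meet_avoids b X \<Longrightarrow> X \<inter> {b} = {}"
  unfolding meet_avoids_def using Inf_fin.coboundedI by fastforce

lemma meet_avoids_insert_above:
  assumes "meet_avoids b X" "Inf_fin X \<le> c"
  shows "meet_avoids b (insert c X)"
  using assms unfolding meet_avoids_def by (simp add: inf_absorb2)

lemma meet_avoids_insert_join_part: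
  fixes b s :: "'a::lattice"
  assumes D: "\<forall>x y z::'a. inf x (sup y z) = sup (inf x y) (inf x z)"
    and X: "meet_avoids b X" and B: "finite B" "is_join B s" and "s \<in> X"
  shows "\<exists>y\<in>B. meet_avoids b (insert y X)"
proof (rule ccontr)
  let ?c = "Inf_fin X"
  assume "\<not> (\<exists>y\<in>B. meet_avoids b (insert y X))"
  then have below: "\<forall>y\<in>B. inf ?c y \<le> b"
    using X by (auto simp: meet_avoids_def inf_commute)
  have "?c \<le> s"
    using X \<open>s \<in> X\<close> by (simp add: meet_avoids_def Inf_fin.coboundedI)
  have "?c \<le> b"
  proof (cases "B = {}")
    case True
    then have "s \<le> b"
      using B(2) unfolding is_join_def by simp
    then show ?thesis
      using \<open>?c \<le> s\<close> by (rule order_trans[rotated])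
  next
    case False
    have "s \<le> Sup_fin B"
      using B Sup_fin.coboundedI unfolding is_join_def by blast
    then have "?c \<le> inf ?c (Sup_fin B)"
      using \<open>?c \<le> s\<close> by simp
    also have "\<dots> \<le> b"
      using inf_Sup_fin_le[OF D B(1) False below] .
    finally show ?thesis .
  qed
  then show False
    using X by (simp add: meet_avoids_def)
qed

lemma omega_strategy_distrib:
  fixes a b :: "'a::lattice"
  assumes D: "\<forall>x y z::'a. inf x (sup y z) = sup (inf x y) (inf x z)"
    and "\<not> a \<le> b"
  shows "omega_strategy \<alpha> \<beta> {a} {b}"
  unfolding omega_strategy_def
proof (intro exI conjI ballI)
  show "{a} \<in> Collect (meet_avoids b)"
    using \<open>\<not> a \<le> b\<close> by (simp add: meet_avoids_def)
next
  fix X assume "X \<in> Collect (meet_avoids b)"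
  then have X: "meet_avoids b X"
    by simp
  then show "X \<inter> {b} = {}"
    by (rule meet_avoids_disjoint)
  have lower: "Inf_fin X \<le> u" if "u \<in> X" for u
    using X that by (simp add: meet_avoids_def Inf_fin.coboundedI)
  show "round_ok \<alpha> \<beta> (\<lambda>Y. Y \<in> Collect (meet_avoids b)) X"
    unfolding round_ok_def mem_Collect_eq
  proof (intro conjI allI impI)
    fix c assume "\<exists>u\<in>X. u \<le> c"
    then have "Inf_fin X \<le> c"
      by (blast intro: lower order_trans)
    with X show "meet_avoids b (insert c X)"
      by (rule meet_avoids_insert_above)
  next
    fix A m assume "A \<subseteq> X \<and> card_less A \<alpha> \<and> is_meet A m"
    then have "Inf_fin X \<le> m"
      using lower unfolding is_meet_def by blast
    with X show "meet_avoids b (insert m X)"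
      by (rule meet_avoids_insert_above)
  next
    fix B s assume B: "card_less B \<beta> \<and> is_join B s \<and> s \<in> X"
    then have "finite B"
      by (simp add: card_less_def)
    with B show "\<exists>y\<in>B. meet_avoids b (insert y X)"
      using meet_avoids_insert_join_part[OF D X] by blast
  qed
qed

theorem corollary6p3:
  shows "((\<forall>(a::'a::lattice) b. \<not> a \<le> b \<longrightarrow>
             (\<forall>m k::enat. 3 \<le> m \<longrightarrow> 3 \<le> k \<longrightarrow> omega_strategy m k {a} {b}))
          \<longleftrightarrow> (\<forall>(a::'a) b. \<not> a \<le> b \<longrightarrow> n_strategy 5 3 3 {a} {b}))
       \<and> ((\<forall>(a::'a) b. \<not> a \<le> b \<longrightarrow> n_strategy 5 3 3 {a} {b})
          \<longleftrightarrow> (\<forall>x y z::'a. inf x (sup y z) = sup (inf x y) (inf x z)))"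
proof -
  let ?omega = "\<forall>(a::'a) b. \<not> a \<le> b \<longrightarrow>
             (\<forall>m k::enat. 3 \<le> m \<longrightarrow> 3 \<le> k \<longrightarrow> omega_strategy m k {a} {b})"
  let ?five = "\<forall>(a::'a) b. \<not> a \<le> b \<longrightarrow> n_strategy 5 3 3 {a} {b}"
  let ?distrib = "\<forall>x y z::'a. inf x (sup y z) = sup (inf x y) (inf x z)"
  have omega_five: "?omega \<Longrightarrow> ?five"
    by (blast intro: omega_strategy_imp_n_strategy)
  have distrib_omega: "?distrib \<Longrightarrow> ?omega"
    by (intro allI impI) (rule omega_strategy_distrib)
  have five_distrib: "?five \<Longrightarrow> ?distrib"
    using distrib_if_n_strategy_5[of 3 3] by blast
  show ?thesis
  proof (intro conjI iffI)
    show ?five if ?omega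
      using that by (rule omega_five)
    show ?omega if ?five
      using that by (intro distrib_omega five_distrib)
    show ?distrib if ?five
      using that by (rule five_distrib)
    show ?five if ?distrib
      using that by (intro omega_five distrib_omega)
  qed
qed

end
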